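(* Let $n\ge2$ and let $\Gamma^\delta_{\mathrm{pc}}$ denote the space of smooth, symmetric, past-compact, divergence-free $(0,2)$-tensor fields on $\mathbb{R}^n$. Define on $\Gamma^\delta_{\mathrm{pc}}$ the operators $${P^{(\mathrm S)}}_{ab}{}^{cd}:=\frac{1}{n-1}\tau_{ab}\tau^{cd},\qquad {P^{(\mathrm{TT})}}_{ab}{}^{cd}:=\frac12\big(\tau_a{}^c\tau_b{}^d+\tau_a{}^d\tau_b{}^c\big)-\frac{1}{n-1}\tau_{ab}\tau^{cd},$$ with $\tau_{ab}:=\eta_{ab}-\partial_a\partial_b\mathsf G_{\mathrm{ret}}$. Then for every $\bar h_{ab}\in\Gamma^\delta_{\mathrm{pc}}$, ${P^{(\mathrm S)}}_{ab}{}^{cd}\bar h_{cd}=\bar h^{\mathrm S}_{ab}$ and ${P^{(\mathrm{TT})}}_{ab}{}^{cd}\bar h_{cd}=\bar h^{\mathrm{TT}}_{ab}$ (the scalar and transverse-traceless components of the past-compact decomposition of $\bar h_{ab}$). Moreover, on $\Gamma^\delta_{\mathrm{pc}}$ one has ${P^{(\mathrm S)}}+{P^{(\mathrm{TT})}}=\mathrm{id}$ and ${P^{(\mathrm S)}}{P^{(\mathrm{TT})}}={P^{(\mathrm{TT})}}{P^{(\mathrm S)}}=0$.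
   Context: Minkowski spacetime $(\mathbb{R}^n,\eta)$, $\eta=\mathrm{diag}(-1,1,\dots,1)$, indices moved with $\eta$, $\square=\eta^{ab}\partial_a\partial_b$; past-compact: support meets $J^-(K)$ compactly for all compact $K$; $\mathsf G_{\mathrm{ret}}$: retarded Green operator of $\square$ on past-compact functions (acting componentwise). In the composed expressions, $\tau^{cd}\bar h_{cd}$ means $\eta^{cd}\bar h_{cd}-\mathsf G_{\mathrm{ret}}(\partial^c\partial^d\bar h_{cd})$, etc. Decomposition: every past-compact symmetric $k_{ab}$ with trace $k$ is uniquely $k^{\mathrm S}_{ab}+k^{\mathrm V}_{ab}+k^{\mathrm{TT}}_{ab}$, $k^{\mathrm S}_{ab}=(\partial_a\partial_b-\frac1n\eta_{ab}\square)u+\frac1n\eta_{ab}k$, $k^{\mathrm V}_{ab}=\partial_au_b+\partial_bu_a$, with $u$ past-compact, $u_a$ past-compact divergence-free, $k^{\mathrm{TT}}_{ab}$ past-compact, divergence-free and traceless. *)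

theory Defs
  imports "HOL-Analysis.Analysis"
begin

text \<open>Minkowski spacetime R^n, points are vectors of type (real,'n) vec.
  The index type 'n is finite and well-ordered; its least element is the time index 0.\<close>

type_synonym 'n sfield = "(real,'n) vec \<Rightarrow> real"
type_synonym 'n vfield = "'n \<Rightarrow> (real,'n) vec \<Rightarrow> real"
type_synonym 'n tfield = "'n \<Rightarrow> 'n \<Rightarrow> (real,'n) vec \<Rightarrow> real"

definition time_idx :: "'n::{finite,wellorder}" where
  "time_idx = (LEAST i. True)"

text \<open>Minkowski metric eta = diag(-1,1,...,1); its inverse has the same components.\<close>
definition eta :: "'n::{finite,wellorder} \<Rightarrow> 'n \<Rightarrow> real" where
  "eta a b = (if a = b then (if a = time_idx then -1 else 1) else 0)"

definition mink :: "(real,'n::{finite,wellorder}) vec \<Rightarrow> (real,'n) vec \<Rightarrow> real" where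
  "mink v w = (\<Sum>a\<in>UNIV. \<Sum>b\<in>UNIV. eta a b * v$a * w$b)"

definition pd :: "'n::{finite,wellorder} \<Rightarrow> ((real,'n) vec \<Rightarrow> real) \<Rightarrow> ((real,'n) vec \<Rightarrow> real)" where
  "pd i f = (\<lambda>x. deriv (\<lambda>s. f (x + s *\<^sub>R axis i 1)) 0)"

definition pdu :: "'n::{finite,wellorder} \<Rightarrow> ((real,'n) vec \<Rightarrow> real) \<Rightarrow> ((real,'n) vec \<Rightarrow> real)" where
  "pdu a f = (\<lambda>x. \<Sum>b\<in>UNIV. eta a b * pd b f x)"

definition smooth :: "((real,'n::{finite,wellorder}) vec \<Rightarrow> real) \<Rightarrow> bool" where
  "smooth f \<longleftrightarrow> (\<forall>is. (foldr pd is f) differentiable_on UNIV)"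

definition wave :: "((real,'n::{finite,wellorder}) vec \<Rightarrow> real) \<Rightarrow> ((real,'n) vec \<Rightarrow> real)" where
  "wave f = (\<lambda>x. \<Sum>a\<in>UNIV. \<Sum>b\<in>UNIV. eta a b * pd a (pd b f) x)"

definition causal_fut :: "(real,'n::{finite,wellorder}) vec \<Rightarrow> bool" where
  "causal_fut v \<longleftrightarrow> mink v v \<le> 0 \<and> v $ time_idx \<ge> 0"

definition Jplus :: "((real,'n::{finite,wellorder}) vec) set \<Rightarrow> ((real,'n) vec) set" where
  "Jplus S = {x. \<exists>y\<in>S. causal_fut (x - y)}"

definition Jminus :: "((real,'n::{finite,wellorder}) vec) set \<Rightarrow> ((real,'n) vec) set" where
  "Jminus S = {x. \<exists>y\<in>S. causal_fut (y - x)}"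

definition supp :: "((real,'n::{finite,wellorder}) vec \<Rightarrow> real) \<Rightarrow> ((real,'n) vec) set" where
  "supp f = closure {x. f x \<noteq> 0}"

definition past_compact :: "((real,'n::{finite,wellorder}) vec \<Rightarrow> real) \<Rightarrow> bool" where
  "past_compact f \<longleftrightarrow> (\<forall>K. compact K \<longrightarrow> compact (supp f \<inter> Jminus K))"

definition is_retarded_green ::
  "(((real,'n::{finite,wellorder}) vec \<Rightarrow> real) \<Rightarrow> ((real,'n) vec \<Rightarrow> real)) \<Rightarrow> bool" where
  "is_retarded_green G \<longleftrightarrow>
     (\<forall>f. smooth f \<and> past_compact f \<longrightarrow>
        smooth (G f) \<and> past_compact (G f) \<and> wave (G f) = f \<and> G (wave f) = f
        \<and> supp (G f) \<subseteq> Jplus (supp f))"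

definition smooth_v :: "'n::{finite,wellorder} vfield \<Rightarrow> bool" where
  "smooth_v u \<longleftrightarrow> (\<forall>a. smooth (u a))"
definition pc_v :: "'n::{finite,wellorder} vfield \<Rightarrow> bool" where
  "pc_v u \<longleftrightarrow> (\<forall>a. past_compact (u a))"
definition divfree_v :: "'n::{finite,wellorder} vfield \<Rightarrow> bool" where
  "divfree_v u \<longleftrightarrow> (\<forall>x. (\<Sum>a\<in>UNIV. pdu a (u a) x) = 0)"

definition smooth_t :: "'n::{finite,wellorder} tfield \<Rightarrow> bool" where
  "smooth_t k \<longleftrightarrow> (\<forall>a b. smooth (k a b))"
definition pc_t :: "'n::{finite,wellorder} tfield \<Rightarrow> bool" where
  "pc_t k \<longleftrightarrow> (\<forall>a b. past_compact (k a b))"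
definition sym_t :: "'n::{finite,wellorder} tfield \<Rightarrow> bool" where
  "sym_t k \<longleftrightarrow> (\<forall>a b. k a b = k b a)"
definition divfree_t :: "'n::{finite,wellorder} tfield \<Rightarrow> bool" where
  "divfree_t k \<longleftrightarrow> (\<forall>b x. (\<Sum>a\<in>UNIV. pdu a (k a b) x) = 0)"
definition trace_t :: "'n::{finite,wellorder} tfield \<Rightarrow> ((real,'n) vec \<Rightarrow> real)" where
  "trace_t k = (\<lambda>x. \<Sum>a\<in>UNIV. \<Sum>b\<in>UNIV. eta a b * k a b x)"

definition Gamma_pc :: "'n::{finite,wellorder} tfield set" where
  "Gamma_pc = {k. smooth_t k \<and> sym_t k \<and> pc_t k \<and> divfree_t k}"

definition is_decomp :: "'n::{finite,wellorder} tfield \<Rightarrow> 'n tfield \<Rightarrow> 'n tfield \<Rightarrow> 'n tfield \<Rightarrow> bool" where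
  "is_decomp k kS kV kTT \<longleftrightarrow>
     (\<exists>u. smooth u \<and> past_compact u \<and>
        kS = (\<lambda>a b x. pd a (pd b u) x - eta a b * wave u x / real CARD('n)
                       + eta a b * trace_t k x / real CARD('n))) \<and>
     (\<exists>w. smooth_v w \<and> pc_v w \<and> divfree_v w \<and>
        kV = (\<lambda>a b x. pd a (w b) x + pd b (w a) x)) \<and>
     smooth_t kTT \<and> pc_t kTT \<and> divfree_t kTT \<and> (\<forall>x. trace_t kTT x = 0) \<and>
     (\<forall>a b x. k a b x = kS a b x + kV a b x + kTT a b x)"

definition scalar_part :: "'n::{finite,wellorder} tfield \<Rightarrow> 'n tfield" where
  "scalar_part k = (THE kS. \<exists>kV kTT. is_decomp k kS kV kTT)"
definition TT_part :: "'n::{finite,wellorder} tfield \<Rightarrow> 'n tfield" where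
  "TT_part k = (THE kTT. \<exists>kS kV. is_decomp k kS kV kTT)"

text \<open>tau_{ab} phi = eta_{ab} phi - \<partial>_a \<partial>_b G phi (acting on a scalar).\<close>
definition tau_s :: "(('n::{finite,wellorder} sfield) \<Rightarrow> 'n sfield) \<Rightarrow> 'n sfield \<Rightarrow> 'n tfield" where
  "tau_s G \<phi> = (\<lambda>a b x. eta a b * \<phi> x - pd a (pd b (G \<phi>)) x)"

text \<open>tau^{cd} h_{cd} = eta^{cd} h_{cd} - G(\<partial>^c \<partial>^d h_{cd}).\<close>
definition tau_c :: "(('n::{finite,wellorder} sfield) \<Rightarrow> 'n sfield) \<Rightarrow> 'n tfield \<Rightarrow> 'n sfield" where
  "tau_c G h = (\<lambda>x. (\<Sum>c\<in>UNIV. \<Sum>d\<in>UNIV. eta c d * h c d x)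
                 - G (\<lambda>y. \<Sum>c\<in>UNIV. \<Sum>d\<in>UNIV. pdu c (pdu d (h c d)) y) x)"

text \<open>tau_a^c Y_c = Y_a - \<partial>_a G(\<partial>^c Y_c) (mixed tau acting on one index).\<close>
definition tau_m :: "(('n::{finite,wellorder} sfield) \<Rightarrow> 'n sfield) \<Rightarrow> 'n vfield \<Rightarrow> 'n vfield" where
  "tau_m G Y = (\<lambda>a x. Y a x - pd a (G (\<lambda>y. \<Sum>c\<in>UNIV. pdu c (Y c) y)) x)"

text \<open>tau_a^c tau_b^d h_{cd}.\<close>
definition tau_tau :: "(('n::{finite,wellorder} sfield) \<Rightarrow> 'n sfield) \<Rightarrow> 'n tfield \<Rightarrow> 'n tfield" where
  "tau_tau G h = (\<lambda>a b. tau_m G (\<lambda>c. tau_m G (\<lambda>d. h c d) b) a)"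

definition P_S :: "(('n::{finite,wellorder} sfield) \<Rightarrow> 'n sfield) \<Rightarrow> 'n tfield \<Rightarrow> 'n tfield" where
  "P_S G h = (\<lambda>a b x. tau_s G (tau_c G h) a b x / (real CARD('n) - 1))"

definition P_TT :: "(('n::{finite,wellorder} sfield) \<Rightarrow> 'n sfield) \<Rightarrow> 'n tfield \<Rightarrow> 'n tfield" where
  "P_TT G h = (\<lambda>a b x. (tau_tau G h a b x + tau_tau G (\<lambda>c d. h d c) a b x) / 2
                        - tau_s G (tau_c G h) a b x / (real CARD('n) - 1))"

end

theory Submission
  imports Defs
begin

text \<open>On a divergence-free field h the operators tau only see the trace: \<partial>^c \<partial>^d h_cd = 0 gives
  tau^cd h_cd = tr h, and \<partial>^c h_cd = 0 gives tau_a^c tau_b^d h_cd = h_ab. Hence P_S h = S (tr h) and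
  P_TT h = h - S (tr h), where S \<phi> = tau \<phi> / (n - 1) is the scalar-type field with potential
  u = - G \<phi> / (n - 1); it is divergence-free with trace \<phi>, so h = S (tr h) + 0 + (h - S (tr h)) is a
  past-compact decomposition. It is the only one: the divergence of any decomposition shows that
  \<Phi> = (n - 1) \<box>u + tr h satisfies \<partial>_b \<Phi> = - n \<box>w_b, hence \<box>\<Phi> = - n \<box>(\<partial>^b w_b) = 0. Past-compact
  solutions of the homogeneous wave equation vanish, so \<Phi> = 0 and w = 0, which determines u. The
  projector identities follow from P_S h = S (tr h) and tr (S \<phi>) = \<phi>.\<close>

lemma has_derivative_along_line:
  fixes f :: "'a::real_normed_vector \<Rightarrow> real"
  assumes "(f has_derivative f') (at (y + s0 *\<^sub>R e))"
  shows "((\<lambda>s. f (y + s *\<^sub>R e)) has_real_derivative f' e) (at s0)"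
proof -
  have "((\<lambda>s. y + s *\<^sub>R e) has_derivative (\<lambda>s. s *\<^sub>R e)) (at s0)"
    by (auto intro!: derivative_eq_intros)
  from has_derivative_compose[OF this assms]
  have "((\<lambda>s. f (y + s *\<^sub>R e)) has_derivative (\<lambda>s. f' e * s)) (at s0)"
    using has_derivative_linear[OF assms] by (simp add: o_def linear_scale mult.commute)
  then show ?thesis
    by (simp add: has_field_derivative_def)
qed

lemma pd_eq_frechet:
  assumes "(f has_derivative f') (at z)"
  shows "pd i f z = f' (axis i 1)"
  unfolding pd_def using has_derivative_along_line[of f f' z 0] assms
  by (simp add: DERIV_imp_deriv)

lemma has_real_derivative_pd:
  assumes "f differentiable (at (y + s *\<^sub>R axis i 1))"
  shows "((\<lambda>s. f (y + s *\<^sub>R axis i 1)) has_real_derivative pd i f (y + s *\<^sub>R axis i 1)) (at s)"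
  using assms has_derivative_along_line pd_eq_frechet unfolding differentiable_def by metis

lemma pd_add_at:
  assumes "f differentiable (at z)" "g differentiable (at z)"
  shows "pd i (\<lambda>x. f x + g x) z = pd i f z + pd i g z"
proof -
  obtain f' g' where f: "(f has_derivative f') (at z)" and g: "(g has_derivative g') (at z)"
    using assms unfolding differentiable_def by blast
  show ?thesis
    using pd_eq_frechet[OF has_derivative_add[OF f g]] pd_eq_frechet[OF f] pd_eq_frechet[OF g] by simp
qed

lemma pd_cmult_at:
  assumes "f differentiable (at z)"
  shows "pd i (\<lambda>x. c * f x) z = c * pd i f z"
proof -
  obtain f' where f: "(f has_derivative f') (at z)"
    using assms unfolding differentiable_def by blast
  show ?thesis
    using pd_eq_frechet[OF has_derivative_mult_right[OF f, of c]] pd_eq_frechet[OF f] by simp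
qed

lemma pd_sum_at:
  assumes "\<And>j. j \<in> S \<Longrightarrow> f j differentiable (at z)"
  shows "pd i (\<lambda>x. \<Sum>j\<in>S. f j x) z = (\<Sum>j\<in>S. pd i (f j) z)"
proof -
  obtain F where F: "\<And>j. j \<in> S \<Longrightarrow> (f j has_derivative F j) (at z)"
    using assms unfolding differentiable_def by metis
  show ?thesis
    using pd_eq_frechet[OF has_derivative_sum[OF F]] pd_eq_frechet[OF F] by simp
qed

lemma pd_zero [simp]: "pd i (\<lambda>x. 0) = (\<lambda>x. 0)"
  unfolding pd_def by simp

lemma pd_shift: "pd i (\<lambda>z. f (z + c)) = (\<lambda>z. pd i f (z + c))"
  unfolding pd_def by (simp add: algebra_simps)

lemma smooth_imp_differentiable:
  assumes "smooth f"
  shows "f differentiable (at x)"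
  using assms[unfolded smooth_def, rule_format, of "[]"] by (simp add: differentiable_on_def)

lemma smooth_pd [simp]:
  assumes "smooth f"
  shows "smooth (pd i f)"
  unfolding smooth_def
proof
  fix "is"
  show "foldr pd is (pd i f) differentiable_on UNIV"
    using assms[unfolded smooth_def, rule_format, of "is @ [i]"] by simp
qed

lemma smooth_foldr_pd: "smooth f \<Longrightarrow> smooth (foldr pd is f)"
  by (induction "is") auto

lemma smooth_zero [simp]: "smooth (\<lambda>x::(real,'n::{finite,wellorder}) vec. 0)"
proof -
  have "foldr pd is (\<lambda>x::(real,'n) vec. 0) = (\<lambda>x. 0)" for "is"
    by (induction "is") auto
  then show ?thesis
    unfolding smooth_def by (simp add: differentiable_on_const)
qed

lemma smooth_add [simp]:
  assumes "smooth f" "smooth g"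
  shows "smooth (\<lambda>x. f x + g x)"
proof -
  have "foldr pd is (\<lambda>x. f x + g x) = (\<lambda>x. foldr pd is f x + foldr pd is g x)" for "is"
    by (induction "is") (auto simp: pd_add_at smooth_imp_differentiable smooth_foldr_pd assms)
  with assms show ?thesis
    unfolding smooth_def by (simp add: differentiable_on_def differentiable_add)
qed

lemma smooth_cmult [simp]:
  assumes "smooth f"
  shows "smooth (\<lambda>x. c * f x)"
proof -
  have "foldr pd is (\<lambda>x. c * f x) = (\<lambda>x. c * foldr pd is f x)" for "is"
    by (induction "is") (auto simp: pd_cmult_at smooth_imp_differentiable smooth_foldr_pd assms)
  with assms show ?thesis
    unfolding smooth_def by (simp add: differentiable_on_def differentiable_cmult_left_iff)
qed

lemma smooth_diff [simp]:
  assumes "smooth f" "smooth g"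
  shows "smooth (\<lambda>x. f x - g x)"
proof -
  have "smooth (\<lambda>x. f x + (-1) * g x)"
    using assms by (intro smooth_add smooth_cmult)
  then show ?thesis
    by simp
qed

lemma smooth_divide [simp]: "smooth f \<Longrightarrow> smooth (\<lambda>x. f x / c)"
  using smooth_cmult[of f "inverse c"] by (simp add: divide_inverse mult.commute)

lemma smooth_sum [simp]: "(\<And>j. j \<in> S \<Longrightarrow> smooth (f j)) \<Longrightarrow> smooth (\<lambda>x. \<Sum>j\<in>S. f j x)"
  by (induction S rule: infinite_finite_induct) auto

lemma smooth_shift [simp]:
  assumes "smooth f"
  shows "smooth (\<lambda>z. f (z + c))"
proof -
  have "foldr pd is (\<lambda>z. f (z + c)) = (\<lambda>z. foldr pd is f (z + c))" for "is"
    by (induction "is") (auto simp: pd_shift)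
  moreover have "(\<lambda>z. g (z + c)) differentiable_on UNIV" if "g differentiable_on UNIV"
    for g :: "(real,'a) vec \<Rightarrow> real"
    using that differentiable_chain_at[of "\<lambda>z. z + c" _ g]
    by (auto simp: differentiable_on_def o_def)
  ultimately show ?thesis
    using assms unfolding smooth_def by simp
qed

lemma pd_add: "smooth f \<Longrightarrow> smooth g \<Longrightarrow> pd i (\<lambda>x. f x + g x) = (\<lambda>x. pd i f x + pd i g x)"
  by (auto simp: pd_add_at smooth_imp_differentiable)

lemma pd_cmult: "smooth f \<Longrightarrow> pd i (\<lambda>x. c * f x) = (\<lambda>x. c * pd i f x)"
  by (auto simp: pd_cmult_at smooth_imp_differentiable)

lemma pd_diff:
  assumes "smooth f" "smooth g"
  shows "pd i (\<lambda>x. f x - g x) = (\<lambda>x. pd i f x - pd i g x)"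
proof -
  have "pd i (\<lambda>x. f x + (-1) * g x) = (\<lambda>x. pd i f x + (-1) * pd i g x)"
    using assms by (simp only: pd_add pd_cmult smooth_cmult)
  then show ?thesis
    by simp
qed

lemma pd_divide: "smooth f \<Longrightarrow> pd i (\<lambda>x. f x / c) = (\<lambda>x. pd i f x / c)"
  using pd_cmult[of f i "inverse c"] by (simp add: divide_inverse mult.commute)

lemma pd_sum:
  "(\<And>j. j \<in> S \<Longrightarrow> smooth (f j)) \<Longrightarrow> pd i (\<lambda>x. \<Sum>j\<in>S. f j x) = (\<lambda>x. \<Sum>j\<in>S. pd i (f j) x)"
  by (auto simp: pd_sum_at smooth_imp_differentiable)

section \<open>Symmetry of second partial derivatives\<close>

lemma pd_mean_value:
  assumes "smooth g" "0 < h"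
  obtains s where "0 < s" "s < h" "g (y + h *\<^sub>R axis i 1) - g y = h * pd i g (y + s *\<^sub>R axis i 1)"
proof -
  have "\<exists>s>0. s < h \<and> g (y + h *\<^sub>R axis i 1) - g (y + 0 *\<^sub>R axis i 1)
                        = (h - 0) * pd i g (y + s *\<^sub>R axis i 1)"
    using assms by (intro MVT2 has_real_derivative_pd smooth_imp_differentiable)
  with that show ?thesis
    by auto
qed

lemma second_difference_mean_value:
  assumes "smooth f" "0 < h"
  obtains s t where "0 < s" "s < h" "0 < t" "t < h"
    "f (x + h *\<^sub>R axis a 1 + h *\<^sub>R axis b 1) - f (x + h *\<^sub>R axis a 1) - f (x + h *\<^sub>R axis b 1) + f x
       = h * h * pd b (pd a f) (x + s *\<^sub>R axis a 1 + t *\<^sub>R axis b 1)"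
proof -
  define g where "g z = f (z + h *\<^sub>R axis b 1) - f z" for z
  have "smooth g"
    unfolding g_def using assms by simp
  then obtain s where s: "0 < s" "s < h" "g (x + h *\<^sub>R axis a 1) - g x = h * pd a g (x + s *\<^sub>R axis a 1)"
    using pd_mean_value assms(2) by blast
  have "pd a g = (\<lambda>z. pd a f (z + h *\<^sub>R axis b 1) - pd a f z)"
    unfolding g_def using assms by (simp add: pd_diff pd_shift)
  moreover obtain t where "0 < t" "t < h"
    "pd a f (x + s *\<^sub>R axis a 1 + h *\<^sub>R axis b 1) - pd a f (x + s *\<^sub>R axis a 1)
       = h * pd b (pd a f) (x + s *\<^sub>R axis a 1 + t *\<^sub>R axis b 1)"
    using pd_mean_value[OF smooth_pd[OF assms(1)] assms(2)] by blast
  ultimately show ?thesis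
    using that s unfolding g_def by (simp add: algebra_simps)
qed

lemma dist_add_axis_steps:
  fixes x :: "(real,'n::finite) vec"
  assumes "0 \<le> s" "0 \<le> t"
  shows "dist (x + s *\<^sub>R axis a 1 + t *\<^sub>R axis b 1) x \<le> s + t"
proof -
  have "dist (x + s *\<^sub>R axis a 1 + t *\<^sub>R axis b 1) x = norm (s *\<^sub>R axis a 1 + t *\<^sub>R axis b (1::real))"
    by (simp add: dist_norm)
  also have "\<dots> \<le> norm (s *\<^sub>R axis a (1::real)) + norm (t *\<^sub>R axis b (1::real))"
    by (rule norm_triangle_ineq)
  finally show ?thesis
    using assms by simp
qed

lemma mixed_pd_agree_nearby:
  assumes f: "smooth f" and h: "0 < h"
  obtains p q where "dist p x < 2 * h" "dist q x < 2 * h" "pd b (pd a f) p = pd a (pd b f) q"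
proof -
  obtain s t where st: "0 < s" "s < h" "0 < t" "t < h"
    "f (x + h *\<^sub>R axis a 1 + h *\<^sub>R axis b 1) - f (x + h *\<^sub>R axis a 1) - f (x + h *\<^sub>R axis b 1) + f x
       = h * h * pd b (pd a f) (x + s *\<^sub>R axis a 1 + t *\<^sub>R axis b 1)"
    using second_difference_mean_value[OF f h] by blast
  obtain s' t' where st': "0 < s'" "s' < h" "0 < t'" "t' < h"
    "f (x + h *\<^sub>R axis b 1 + h *\<^sub>R axis a 1) - f (x + h *\<^sub>R axis b 1) - f (x + h *\<^sub>R axis a 1) + f x
       = h * h * pd a (pd b f) (x + s' *\<^sub>R axis b 1 + t' *\<^sub>R axis a 1)"
    using second_difference_mean_value[OF f h] by blast
  have "f (x + h *\<^sub>R axis b 1 + h *\<^sub>R axis a 1) = f (x + h *\<^sub>R axis a 1 + h *\<^sub>R axis b 1)"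
    by (simp add: add_ac)
  then have "h * h * pd b (pd a f) (x + s *\<^sub>R axis a 1 + t *\<^sub>R axis b 1)
               = h * h * pd a (pd b f) (x + s' *\<^sub>R axis b 1 + t' *\<^sub>R axis a 1)"
    using st(5) st'(5) by linarith
  moreover have "dist (x + s *\<^sub>R axis a 1 + t *\<^sub>R axis b 1) x < 2 * h"
    "dist (x + s' *\<^sub>R axis b 1 + t' *\<^sub>R axis a 1) x < 2 * h"
    using dist_add_axis_steps[of s t x a b] dist_add_axis_steps[of s' t' x b a] st st' by linarith+
  ultimately show ?thesis
    using that h by simp
qed

text \<open>Schwarz's theorem: both mixed derivatives are limits of the same second difference quotient.\<close>

lemma pd_commute:
  assumes f: "smooth f"
  shows "pd a (pd b f) = pd b (pd a f)"
proof
  fix x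
  let ?D1 = "pd b (pd a f)" and ?D2 = "pd a (pd b f)"
  have "\<bar>?D2 x - ?D1 x\<bar> < e" if "e > 0" for e
  proof -
    have "isCont ?D1 x" "isCont ?D2 x"
      using f by (auto intro!: differentiable_imp_continuous_within smooth_imp_differentiable)
    then have "\<exists>r>0. \<forall>z. dist z x < r \<longrightarrow> dist (?D1 z) (?D1 x) < e / 2"
      and "\<exists>r>0. \<forall>z. dist z x < r \<longrightarrow> dist (?D2 z) (?D2 x) < e / 2"
      using half_gt_zero[OF \<open>e > 0\<close>] unfolding continuous_at_eps_delta by blast+
    then obtain r1 r2 where r1: "r1 > 0" "\<And>z. dist z x < r1 \<Longrightarrow> \<bar>?D1 z - ?D1 x\<bar> < e / 2"
      and r2: "r2 > 0" "\<And>z. dist z x < r2 \<Longrightarrow> \<bar>?D2 z - ?D2 x\<bar> < e / 2"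
      unfolding dist_real_def by blast
    obtain p q where near: "dist p x < min r1 r2" "dist q x < min r1 r2" and pq: "?D1 p = ?D2 q"
      using mixed_pd_agree_nearby[OF f, of "min r1 r2 / 2" x b a] r1(1) r2(1) by auto
    have "\<bar>?D1 p - ?D1 x\<bar> < e / 2" "\<bar>?D2 q - ?D2 x\<bar> < e / 2"
      using near r1(2) r2(2) by simp_all
    with pq show ?thesis
      by arith
  qed
  from this[of "\<bar>?D2 x - ?D1 x\<bar>"] show "?D2 x = ?D1 x"
    by auto
qed

section \<open>Supports and past compactness\<close>

lemma zero_outside_supp: "x \<notin> supp f \<Longrightarrow> f x = 0"
  unfolding supp_def using closure_subset[of "{x. f x \<noteq> 0}"] by auto

lemma supp_zero [simp]: "supp (\<lambda>x. 0) = {}"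
  unfolding supp_def by simp

lemma pd_zero_outside_supp:
  assumes "x \<notin> supp f"
  shows "pd i f x = 0"
proof -
  define S where "S = (\<lambda>s::real. x + s *\<^sub>R axis i 1) -` (- supp f)"
  have "open S"
    unfolding S_def supp_def by (rule open_vimage) (auto intro!: continuous_intros)
  moreover have "0 \<in> S"
    unfolding S_def using assms by simp
  ultimately have "((\<lambda>s. f (x + s *\<^sub>R axis i 1)) has_real_derivative 0) (at 0)"
    using has_field_derivative_transform_within_open[of "\<lambda>s. 0" 0 0 S]
    by (auto simp: S_def zero_outside_supp)
  then show ?thesis
    unfolding pd_def by (rule DERIV_imp_deriv)
qed

lemma supp_pd_subset: "supp (pd i f) \<subseteq> supp f"
  unfolding supp_def[of "pd i f"]
proof (rule closure_minimal)
  show "{x. pd i f x \<noteq> 0} \<subseteq> supp f"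
    using pd_zero_outside_supp by blast
  show "closed (supp f)"
    by (simp add: supp_def)
qed

lemma supp_subset_Un: "(\<And>x. g x \<noteq> 0 \<Longrightarrow> f1 x \<noteq> 0 \<or> f2 x \<noteq> 0) \<Longrightarrow> supp g \<subseteq> supp f1 \<union> supp f2"
  unfolding supp_def closure_Un[symmetric] by (rule closure_mono) auto

lemma past_compact_supp_subset:
  assumes "past_compact f1" "past_compact f2" "supp g \<subseteq> supp f1 \<union> supp f2"
  shows "past_compact g"
  unfolding past_compact_def
proof (intro allI impI)
  fix K :: "(real,'a) vec set"
  assume "compact K"
  with assms(1,2) have "compact ((supp f1 \<inter> Jminus K) \<union> (supp f2 \<inter> Jminus K))"
    unfolding past_compact_def by blast
  moreover have "supp g \<inter> Jminus K = supp g \<inter> ((supp f1 \<inter> Jminus K) \<union> (supp f2 \<inter> Jminus K))"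
    using assms(3) by blast
  ultimately show "compact (supp g \<inter> Jminus K)"
    unfolding supp_def by (metis closed_Int_compact closed_closure)
qed

lemma past_compact_zero [simp]: "past_compact (\<lambda>x. 0)"
  unfolding past_compact_def by simp

lemma past_compact_add [simp]: "past_compact f \<Longrightarrow> past_compact g \<Longrightarrow> past_compact (\<lambda>x. f x + g x)"
  using past_compact_supp_subset[of f g] supp_subset_Un[of "\<lambda>x. f x + g x" f g] by auto

lemma past_compact_diff [simp]: "past_compact f \<Longrightarrow> past_compact g \<Longrightarrow> past_compact (\<lambda>x. f x - g x)"
  using past_compact_supp_subset[of f g] supp_subset_Un[of "\<lambda>x. f x - g x" f g] by auto

lemma past_compact_cmult [simp]: "past_compact f \<Longrightarrow> past_compact (\<lambda>x. c * f x)"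
  using past_compact_supp_subset[of f f] supp_subset_Un[of "\<lambda>x. c * f x" f f] by auto

lemma past_compact_divide [simp]: "past_compact f \<Longrightarrow> past_compact (\<lambda>x. f x / c)"
  using past_compact_supp_subset[of f f] supp_subset_Un[of "\<lambda>x. f x / c" f f] by auto

lemma past_compact_pd [simp]: "past_compact f \<Longrightarrow> past_compact (pd i f)"
  using past_compact_supp_subset supp_pd_subset by blast

lemma past_compact_sum [simp]:
  "(\<And>j. j \<in> S \<Longrightarrow> past_compact (f j)) \<Longrightarrow> past_compact (\<lambda>x. \<Sum>j\<in>S. f j x)"
  by (induction S rule: infinite_finite_induct) auto

lemma eta_commute: "eta a b = eta b a"
  unfolding eta_def by auto

lemma eta_diag_sq [simp]: "eta a a * eta a a = 1"
  unfolding eta_def by auto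

lemma sum_eta_left [simp]: "(\<Sum>b\<in>UNIV. eta a b * X b) = eta a a * X a"
  by (subst sum.remove[of _ a]) (auto simp: eta_def)

lemma sum_eta_right [simp]: "(\<Sum>b\<in>UNIV. eta b a * X b) = eta a a * X a"
  by (subst sum.remove[of _ a]) (auto simp: eta_def)

lemma pdu_diag: "pdu a f = (\<lambda>x. eta a a * pd a f x)"
  unfolding pdu_def by simp

lemma wave_diag: "wave f = (\<lambda>x. \<Sum>a\<in>UNIV. eta a a * pd a (pd a f) x)"
  unfolding wave_def by simp

lemma trace_t_diag: "trace_t k = (\<lambda>x. \<Sum>a\<in>UNIV. eta a a * k a a x)"
  unfolding trace_t_def by simp

lemma smooth_wave [simp]: "smooth f \<Longrightarrow> smooth (wave f)"
  unfolding wave_def by simp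

lemma past_compact_wave [simp]: "past_compact f \<Longrightarrow> past_compact (wave f)"
  unfolding wave_def by simp

lemma wave_zero [simp]: "wave (\<lambda>x. 0) = (\<lambda>x. 0)"
  unfolding wave_def by simp

lemma wave_cmult: "smooth f \<Longrightarrow> wave (\<lambda>x. c * f x) = (\<lambda>x. c * wave f x)"
  by (simp add: wave_diag pd_cmult sum_distrib_left algebra_simps)

lemma wave_divide: "smooth f \<Longrightarrow> wave (\<lambda>x. f x / c) = (\<lambda>x. wave f x / c)"
  by (simp add: wave_diag pd_divide sum_divide_distrib)

lemma wave_sum:
  "(\<And>j. smooth (f j)) \<Longrightarrow> wave (\<lambda>x. \<Sum>j\<in>S. f j x) = (\<lambda>x. \<Sum>j\<in>S. wave (f j) x)"
  by (simp add: wave_diag pd_sum sum_distrib_left) (rule ext, rule sum.swap)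

lemma wave_pd_commute:
  assumes g: "smooth g"
  shows "wave (pd b g) = pd b (wave g)"
proof -
  have "pd a (pd a (pd b g)) = pd b (pd a (pd a g))" for a
    using pd_commute[OF g, of a b] pd_commute[OF smooth_pd[OF g, of a], of a b] by simp
  then show ?thesis
    using g by (simp add: wave_diag pd_sum pd_cmult)
qed

definition scalar_type :: "'n::{finite,wellorder} sfield \<Rightarrow> 'n sfield \<Rightarrow> 'n tfield" where
  "scalar_type u T = (\<lambda>a b x. pd a (pd b u) x - eta a b * wave u x / real CARD('n)
                               + eta a b * T x / real CARD('n))"

definition vector_type :: "'n::{finite,wellorder} vfield \<Rightarrow> 'n tfield" where
  "vector_type w = (\<lambda>a b x. pd a (w b) x + pd b (w a) x)"

lemma is_decomp_iff:
  "is_decomp k kS kV kTT \<longleftrightarrow>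
     (\<exists>u. smooth u \<and> past_compact u \<and> kS = scalar_type u (trace_t k)) \<and>
     (\<exists>w. smooth_v w \<and> pc_v w \<and> divfree_v w \<and> kV = vector_type w) \<and>
     smooth_t kTT \<and> pc_t kTT \<and> divfree_t kTT \<and> (\<forall>x. trace_t kTT x = 0) \<and>
     (\<forall>a b x. k a b x = kS a b x + kV a b x + kTT a b x)"
  unfolding is_decomp_def scalar_type_def vector_type_def ..

lemma trace_scalar_type:
  fixes u T :: "'n::{finite,wellorder} sfield"
  shows "trace_t (scalar_type u T) = T"
proof
  fix x
  let ?N = "real CARD('n)"
  have "eta a a * scalar_type u T a a x = eta a a * pd a (pd a u) x - wave u x / ?N + T x / ?N" for a
    by (simp add: scalar_type_def right_diff_distrib distrib_left mult.assoc[symmetric])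
  then have "trace_t (scalar_type u T) x = wave u x - ?N * (wave u x / ?N) + ?N * (T x / ?N)"
    by (simp add: trace_t_diag wave_diag sum.distrib sum_subtractf)
  then show "trace_t (scalar_type u T) x = T x"
    by simp
qed

lemma div_scalar_type:
  fixes u T :: "'n::{finite,wellorder} sfield"
  assumes "smooth u" "smooth T"
  shows "(\<Sum>a\<in>UNIV. pdu a (scalar_type u T a b) x)
           = (1 - 1 / real CARD('n)) * pd b (wave u) x + pd b T x / real CARD('n)"
proof -
  let ?N = "real CARD('n)"
  have "pdu a (scalar_type u T a b) x
          = eta a a * pd a (pd a (pd b u)) x - eta a b * (eta a a * pd a (wave u) x / ?N)
            + eta a b * (eta a a * pd a T x / ?N)" for a
    using assms by (simp add: scalar_type_def pdu_diag pd_add pd_diff pd_divide pd_cmult)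
      (simp add: algebra_simps)
  then have "(\<Sum>a\<in>UNIV. pdu a (scalar_type u T a b) x)
               = (\<Sum>a\<in>UNIV. eta a a * pd a (pd a (pd b u)) x)
                 - (\<Sum>a\<in>UNIV. eta a b * (eta a a * pd a (wave u) x / ?N))
                 + (\<Sum>a\<in>UNIV. eta a b * (eta a a * pd a T x / ?N))"
    by (simp only: sum.distrib sum_subtractf)
  also have "\<dots> = wave (pd b u) x - pd b (wave u) x / ?N + pd b T x / ?N"
    by (simp only: sum_eta_right wave_diag) (simp add: mult.assoc[symmetric])
  finally show ?thesis
    using assms by (simp add: wave_pd_commute algebra_simps diff_divide_distrib)
qed

lemma div_vector_type:
  assumes "smooth_v w" "divfree_v w"
  shows "(\<Sum>a\<in>UNIV. pdu a (vector_type w a b) x) = wave (w b) x"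
proof -
  have w: "\<And>a. smooth (w a)" and div: "(\<lambda>x. \<Sum>a\<in>UNIV. eta a a * pd a (w a) x) = (\<lambda>x. 0)"
    using assms unfolding smooth_v_def divfree_v_def pdu_diag by auto
  have "(\<Sum>a\<in>UNIV. eta a a * pd b (pd a (w a)) x) = pd b (\<lambda>x. \<Sum>a\<in>UNIV. eta a a * pd a (w a) x) x"
    using w by (simp add: pd_sum pd_cmult)
  also have "\<dots> = 0"
    unfolding div by simp
  finally show ?thesis
    using w by (simp add: vector_type_def pdu_diag pd_add pd_commute[of "w _" b] distrib_left
        sum.distrib wave_diag)
qed

lemma Gamma_pc_smooth [simp]: "h \<in> Gamma_pc \<Longrightarrow> smooth (h a b)"
  unfolding Gamma_pc_def smooth_t_def by blast

lemma Gamma_pc_past_compact [simp]: "h \<in> Gamma_pc \<Longrightarrow> past_compact (h a b)"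
  unfolding Gamma_pc_def pc_t_def by blast

lemma Gamma_pc_sym: "h \<in> Gamma_pc \<Longrightarrow> h a b = h b a"
  unfolding Gamma_pc_def sym_t_def by blast

lemma Gamma_pc_div:
  "h \<in> Gamma_pc \<Longrightarrow> (\<lambda>x. \<Sum>a\<in>UNIV. eta a a * pd a (h a b) x) = (\<lambda>x. 0)"
  unfolding Gamma_pc_def divfree_t_def by (simp add: pdu_diag)

lemma Gamma_pc_div_sym:
  "h \<in> Gamma_pc \<Longrightarrow> (\<lambda>x. \<Sum>a\<in>UNIV. eta a a * pd a (h b a) x) = (\<lambda>x. 0)"
  using Gamma_pc_div[of h b] Gamma_pc_sym[of h] by simp

lemma Gamma_pc_diff:
  assumes "h \<in> Gamma_pc" "k \<in> Gamma_pc"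
  shows "(\<lambda>a b x. h a b x - k a b x) \<in> Gamma_pc"
proof -
  have "divfree_t (\<lambda>a b x. h a b x - k a b x)"
    using assms Gamma_pc_div[of h] Gamma_pc_div[of k]
    by (simp add: divfree_t_def pdu_diag pd_diff right_diff_distrib sum_subtractf fun_eq_iff)
  moreover have "sym_t (\<lambda>a b x. h a b x - k a b x)"
    unfolding sym_t_def using assms Gamma_pc_sym by metis
  ultimately show ?thesis
    using assms unfolding Gamma_pc_def smooth_t_def pc_t_def by simp
qed

lemma smooth_trace [simp]: "h \<in> Gamma_pc \<Longrightarrow> smooth (trace_t h)"
  by (simp add: trace_t_diag)

lemma past_compact_trace [simp]: "h \<in> Gamma_pc \<Longrightarrow> past_compact (trace_t h)"
  by (simp add: trace_t_diag)

lemma trace_diff: "trace_t (\<lambda>a b x. h a b x - k a b x) = (\<lambda>x. trace_t h x - trace_t k x)"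
  by (simp add: trace_t_diag right_diff_distrib sum_subtractf)

lemma is_decomp_Gamma_pc_divergence:
  fixes h :: "'n::{finite,wellorder} tfield"
  assumes h: "h \<in> Gamma_pc" and dec: "is_decomp h kS kV kTT"
  obtains u w where "smooth u" "past_compact u" "kS = scalar_type u (trace_t h)"
    and "smooth_v w" "pc_v w" "divfree_v w" "kV = vector_type w"
    and "\<And>b. pd b (\<lambda>x. (real CARD('n) - 1) * wave u x + trace_t h x)
               = (\<lambda>x. - real CARD('n) * wave (w b) x)"
proof -
  let ?T = "trace_t h" and ?N = "real CARD('n)"
  obtain u w where u: "smooth u" "past_compact u" and kS: "kS = scalar_type u ?T"
    and w: "smooth_v w" "pc_v w" "divfree_v w" and kV: "kV = vector_type w"
    and kTT: "smooth_t kTT" "divfree_t kTT"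
    and sum: "\<And>a b. h a b = (\<lambda>x. kS a b x + kV a b x + kTT a b x)"
    using dec unfolding is_decomp_iff by blast
  have sw: "\<And>a. smooth (w a)"
    using w(1) unfolding smooth_v_def ..
  have T: "smooth ?T"
    using h by simp
  have "smooth (kS a b)" "smooth (kV a b)" "smooth (kTT a b)" for a b
    using u T sw kTT(1) unfolding kS kV smooth_t_def by (simp_all add: scalar_type_def vector_type_def)
  then have "pdu a (h a b) x = pdu a (kS a b) x + pdu a (kV a b) x + pdu a (kTT a b) x" for a b x
    unfolding sum by (simp add: pdu_diag pd_add distrib_left)
  then have "(\<Sum>a\<in>UNIV. pdu a (h a b) x)
          = (\<Sum>a\<in>UNIV. pdu a (kS a b) x) + (\<Sum>a\<in>UNIV. pdu a (kV a b) x) + (\<Sum>a\<in>UNIV. pdu a (kTT a b) x)"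
    for b x
    by (simp add: sum.distrib)
  then have "(1 - 1 / ?N) * pd b (wave u) x + pd b ?T x / ?N + wave (w b) x = 0" for b x
    using h kTT(2) div_scalar_type[OF u(1) T] div_vector_type[OF w(1,3)]
    unfolding Gamma_pc_def divfree_t_def kS kV by simp
  then have "(?N - 1) * pd b (wave u) x + pd b ?T x = - ?N * wave (w b) x" for b x
    by (simp add: field_simps)
  moreover have "pd b (\<lambda>x. (?N - 1) * wave u x + ?T x) x = (?N - 1) * pd b (wave u) x + pd b ?T x" for b x
    using u T by (simp add: pd_add pd_cmult)
  ultimately show ?thesis
    using that u kS w kV by (simp add: fun_eq_iff)
qed

section \<open>The retarded Green operator\<close>

locale retarded_green =
  fixes G :: "('n::{finite,wellorder} sfield) \<Rightarrow> 'n sfield"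
  assumes green: "is_retarded_green G"
begin

lemma smooth_G [simp]: "smooth f \<Longrightarrow> past_compact f \<Longrightarrow> smooth (G f)"
  using green unfolding is_retarded_green_def by blast

lemma past_compact_G [simp]: "smooth f \<Longrightarrow> past_compact f \<Longrightarrow> past_compact (G f)"
  using green unfolding is_retarded_green_def by blast

lemma wave_G [simp]: "smooth f \<Longrightarrow> past_compact f \<Longrightarrow> wave (G f) = f"
  using green unfolding is_retarded_green_def by blast

lemma G_wave: "smooth u \<Longrightarrow> past_compact u \<Longrightarrow> G (wave u) = u"
  using green unfolding is_retarded_green_def by blast

lemma G_zero [simp]: "G (\<lambda>x. 0) = (\<lambda>x. 0)"
  using G_wave[of "\<lambda>x. 0"] by simp

lemma wave_eq_zero_imp_zero:
  fixes u :: "'n sfield"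
  shows "smooth u \<Longrightarrow> past_compact u \<Longrightarrow> wave u = (\<lambda>x. 0) \<Longrightarrow> u = (\<lambda>x. 0)"
  using G_wave[of u] by simp

text \<open>\<box>\<Phi> = c \<box>(\<partial>^b w_b) = 0.\<close>

lemma gradient_eq_wave_divfree_imp_zero:
  fixes \<Phi> :: "'n sfield" and w :: "'n vfield"
  assumes \<Phi>: "smooth \<Phi>" "past_compact \<Phi>" and w: "smooth_v w" "divfree_v w"
    and grad: "\<And>b. pd b \<Phi> = (\<lambda>x. c * wave (w b) x)"
  shows "\<Phi> = (\<lambda>x. 0)"
proof (rule wave_eq_zero_imp_zero[OF \<Phi>])
  have sw: "\<And>b. smooth (w b)" and div: "(\<lambda>x. \<Sum>b\<in>UNIV. eta b b * pd b (w b) x) = (\<lambda>x. 0)"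
    using w unfolding smooth_v_def divfree_v_def pdu_diag by auto
  have "wave \<Phi> = (\<lambda>x. \<Sum>b\<in>UNIV. eta b b * pd b (pd b \<Phi>) x)"
    by (rule wave_diag)
  also have "\<dots> = (\<lambda>x. c * (\<Sum>b\<in>UNIV. eta b b * wave (pd b (w b)) x))"
    using sw by (simp add: grad pd_cmult wave_pd_commute sum_distrib_left algebra_simps)
  also have "\<dots> = (\<lambda>x. c * wave (\<lambda>x. \<Sum>b\<in>UNIV. eta b b * pd b (w b) x) x)"
    using sw by (simp add: wave_sum wave_cmult)
  finally show "wave \<Phi> = (\<lambda>x. 0)"
    unfolding div by simp
qed

lemma tau_c_Gamma_pc: "h \<in> Gamma_pc \<Longrightarrow> tau_c G h = trace_t h"
proof -
  assume h: "h \<in> Gamma_pc"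
  have "(\<Sum>d\<in>UNIV. pdu c (pdu d (h c d)) y) = eta c c * pd c (\<lambda>x. \<Sum>d\<in>UNIV. eta d d * pd d (h c d) x) y"
    for c y
    using h by (simp add: pdu_diag pd_cmult pd_sum sum_distrib_left algebra_simps)
  then show ?thesis
    using h by (simp add: tau_c_def trace_t_def Gamma_pc_div_sym)
qed

lemma tau_tau_Gamma_pc: "h \<in> Gamma_pc \<Longrightarrow> tau_tau G h = h"
  by (simp add: tau_tau_def tau_m_def pdu_diag Gamma_pc_div Gamma_pc_div_sym)

end

section \<open>The scalar part of a divergence-free field\<close>

locale retarded_green_dim2 = retarded_green G for G :: "('n::{finite,wellorder} sfield) \<Rightarrow> 'n sfield" +
  assumes two_le_dim: "2 \<le> CARD('n)"
begin

definition scalar_of_trace :: "'n sfield \<Rightarrow> 'n tfield" where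
  "scalar_of_trace \<phi> = (\<lambda>a b x. tau_s G \<phi> a b x / (real CARD('n) - 1))"

lemma dim_ne_zero_one: "real CARD('n) \<noteq> 0" "1 - real CARD('n) \<noteq> 0"
  using two_le_dim by auto

lemma scalar_of_trace_eq_scalar_type:
  assumes \<phi>: "smooth \<phi>" "past_compact \<phi>"
  shows "scalar_of_trace \<phi> = scalar_type (\<lambda>x. G \<phi> x / (1 - real CARD('n))) \<phi>"
proof -
  have pd_u: "pd a (pd b (\<lambda>x. G \<phi> x / (1 - real CARD('n))))
                = (\<lambda>x. pd a (pd b (G \<phi>)) x / (1 - real CARD('n)))" for a b
    using \<phi> by (simp add: pd_divide)
  have wave_u: "wave (\<lambda>x. G \<phi> x / (1 - real CARD('n))) = (\<lambda>x. \<phi> x / (1 - real CARD('n)))"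
    using \<phi> by (simp add: wave_divide)
  have "(e * t - P) / (real CARD('n) - 1)
          = P / (1 - real CARD('n)) - e * (t / (1 - real CARD('n))) / real CARD('n) + e * t / real CARD('n)"
    for e t P
    using dim_ne_zero_one by (simp add: divide_simps) (simp add: algebra_simps)
  then show ?thesis
    unfolding scalar_of_trace_def tau_s_def scalar_type_def pd_u wave_u by (intro ext)
qed

lemma scalar_of_trace_Gamma_pc:
  assumes \<phi>: "smooth \<phi>" "past_compact \<phi>"
  shows "scalar_of_trace \<phi> \<in> Gamma_pc"
proof -
  let ?u = "\<lambda>x. G \<phi> x / (1 - real CARD('n))"
  have u: "smooth ?u"
    using \<phi> by simp
  have pd_wave_u: "pd b (wave ?u) x = pd b \<phi> x / (1 - real CARD('n))" for b x
    using \<phi> by (simp add: wave_divide pd_divide)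
  have "(1 - 1 / real CARD('n)) * pd b (wave ?u) x + pd b \<phi> x / real CARD('n) = 0" for b x
    unfolding pd_wave_u using dim_ne_zero_one by (simp add: field_simps)
  then have div: "divfree_t (scalar_of_trace \<phi>)"
    unfolding divfree_t_def scalar_of_trace_eq_scalar_type[OF \<phi>] using div_scalar_type[OF u \<phi>(1)]
    by simp
  have "tau_s G \<phi> a b = tau_s G \<phi> b a" for a b
    unfolding tau_s_def using pd_commute[OF smooth_G[OF \<phi>], of a b] eta_commute[of a b] by simp
  then have sym: "sym_t (scalar_of_trace \<phi>)"
    unfolding sym_t_def scalar_of_trace_def by simp
  have "smooth_t (scalar_of_trace \<phi>)" "pc_t (scalar_of_trace \<phi>)"
    using \<phi> by (simp_all add: smooth_t_def pc_t_def scalar_of_trace_def tau_s_def)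
  with div sym show ?thesis
    unfolding Gamma_pc_def by blast
qed

lemma trace_scalar_of_trace: "smooth \<phi> \<Longrightarrow> past_compact \<phi> \<Longrightarrow> trace_t (scalar_of_trace \<phi>) = \<phi>"
  by (simp add: scalar_of_trace_eq_scalar_type trace_scalar_type)

lemma scalar_of_trace_zero: "scalar_of_trace (\<lambda>x. 0) = (\<lambda>a b x. 0)"
  by (simp add: scalar_of_trace_def tau_s_def)

lemma P_S_Gamma_pc: "h \<in> Gamma_pc \<Longrightarrow> P_S G h = scalar_of_trace (trace_t h)"
  by (simp add: P_S_def scalar_of_trace_def tau_c_Gamma_pc)

lemma P_TT_Gamma_pc: "h \<in> Gamma_pc \<Longrightarrow> P_TT G h = (\<lambda>a b x. h a b x - scalar_of_trace (trace_t h) a b x)"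
proof -
  assume h: "h \<in> Gamma_pc"
  then have "(\<lambda>c d. h d c) = h"
    using Gamma_pc_sym by blast
  with h show ?thesis
    by (simp add: P_TT_def scalar_of_trace_def tau_tau_Gamma_pc tau_c_Gamma_pc)
qed

lemma is_decomp_scalar_of_trace:
  assumes h: "h \<in> Gamma_pc"
  shows "is_decomp h (scalar_of_trace (trace_t h)) (\<lambda>a b x. 0)
           (\<lambda>a b x. h a b x - scalar_of_trace (trace_t h) a b x)"
proof -
  let ?T = "trace_t h"
  have T: "smooth ?T" "past_compact ?T"
    using h by simp_all
  then have "(\<lambda>a b x. h a b x - scalar_of_trace ?T a b x) \<in> Gamma_pc"
    using Gamma_pc_diff h scalar_of_trace_Gamma_pc by blast
  moreover have "\<exists>u. smooth u \<and> past_compact u \<and> scalar_of_trace ?T = scalar_type u ?T"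
    using T by (intro exI[of _ "\<lambda>x. G ?T x / (1 - real CARD('n))"]) (simp add: scalar_of_trace_eq_scalar_type)
  moreover have "\<exists>w. smooth_v w \<and> pc_v w \<and> divfree_v w \<and> (\<lambda>a b x. 0) = vector_type w"
    by (intro exI[of _ "\<lambda>a x. 0"]) (simp add: smooth_v_def pc_v_def divfree_v_def pdu_diag vector_type_def)
  ultimately show ?thesis
    using T unfolding is_decomp_iff Gamma_pc_def by (simp add: trace_diff trace_scalar_of_trace)
qed

lemma is_decomp_Gamma_pc_unique:
  assumes h: "h \<in> Gamma_pc" and dec: "is_decomp h kS kV kTT"
  shows "kS = scalar_of_trace (trace_t h) \<and> kTT = (\<lambda>a b x. h a b x - scalar_of_trace (trace_t h) a b x)"
proof -
  define T where "T = trace_t h"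
  define N where "N = real CARD('n)"
  have T: "smooth T" "past_compact T"
    unfolding T_def using h by auto
  obtain u w where u: "smooth u" "past_compact u" and kS: "kS = scalar_type u T"
    and w: "smooth_v w" "pc_v w" "divfree_v w" and kV: "kV = vector_type w"
    and grad: "\<And>b. pd b (\<lambda>x. (N - 1) * wave u x + T x) = (\<lambda>x. - N * wave (w b) x)"
    using is_decomp_Gamma_pc_divergence[OF h dec] unfolding T_def N_def by blast
  have \<Phi>: "(\<lambda>x. (N - 1) * wave u x + T x) = (\<lambda>x. 0)"
    using u T w grad by (intro gradient_eq_wave_divfree_imp_zero[where c = "- N"]) auto
  then have "T x = (1 - N) * wave u x" for x
    using fun_cong[OF \<Phi>, of x] by (simp add: algebra_simps)
  then have wave_u: "wave (\<lambda>x. (1 - N) * u x) = T"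
    using u(1) by (simp add: wave_cmult fun_eq_iff)
  have "wave (w a) = (\<lambda>x. 0)" for a
    using grad[of a, unfolded \<Phi>] dim_ne_zero_one unfolding N_def by (simp add: fun_eq_iff)
  then have "w a = (\<lambda>x. 0)" for a
    using w wave_eq_zero_imp_zero unfolding smooth_v_def pc_v_def by blast
  then have "kV = (\<lambda>a b x. 0)"
    unfolding kV vector_type_def by simp
  moreover have "G T = (\<lambda>x. (1 - N) * u x)"
    using G_wave[of "\<lambda>x. (1 - N) * u x"] u wave_u by simp
  then have "kS = scalar_of_trace T"
    using T dim_ne_zero_one unfolding kS scalar_of_trace_eq_scalar_type[OF T] N_def by simp
  moreover have "h a b x = kS a b x + kV a b x + kTT a b x" for a b x
    using dec unfolding is_decomp_def by blast
  ultimately show ?thesis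
    unfolding T_def by (simp add: fun_eq_iff)
qed

lemma scalar_part_Gamma_pc: "h \<in> Gamma_pc \<Longrightarrow> scalar_part h = scalar_of_trace (trace_t h)"
  unfolding scalar_part_def
  by (rule the_equality) (use is_decomp_scalar_of_trace is_decomp_Gamma_pc_unique in blast)+

lemma TT_part_Gamma_pc:
  "h \<in> Gamma_pc \<Longrightarrow> TT_part h = (\<lambda>a b x. h a b x - scalar_of_trace (trace_t h) a b x)"
  unfolding TT_part_def
  by (rule the_equality) (use is_decomp_scalar_of_trace is_decomp_Gamma_pc_unique in blast)+

end

theorem proposition2p6:
  fixes G :: "((real,'n::{finite,wellorder}) vec \<Rightarrow> real) \<Rightarrow> ((real,'n) vec \<Rightarrow> real)"
  assumes "CARD('n) \<ge> 2"
    and "is_retarded_green G"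
  shows "(\<forall>h\<in>Gamma_pc. P_S G h = scalar_part h \<and> P_TT G h = TT_part h)
       \<and> (\<forall>h\<in>Gamma_pc. (\<lambda>a b x. P_S G h a b x + P_TT G h a b x) = h)
       \<and> (\<forall>h\<in>Gamma_pc. P_S G (P_TT G h) = (\<lambda>a b x. 0) \<and> P_TT G (P_S G h) = (\<lambda>a b x. 0))"
proof -
  interpret retarded_green_dim2 G
    using assms by unfold_locales
  have "P_S G h = scalar_part h \<and> P_TT G h = TT_part h
        \<and> (\<lambda>a b x. P_S G h a b x + P_TT G h a b x) = h
        \<and> P_S G (P_TT G h) = (\<lambda>a b x. 0) \<and> P_TT G (P_S G h) = (\<lambda>a b x. 0)"
    if h: "h \<in> Gamma_pc" for h
  proof -
    let ?S = "scalar_of_trace (trace_t h)"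
    have S: "?S \<in> Gamma_pc" "trace_t ?S = trace_t h"
      using h by (simp_all add: scalar_of_trace_Gamma_pc trace_scalar_of_trace)
    moreover have "(\<lambda>a b x. h a b x - ?S a b x) \<in> Gamma_pc"
      using Gamma_pc_diff h S(1) by blast
    moreover have "trace_t (\<lambda>a b x. h a b x - ?S a b x) = (\<lambda>x. 0)"
      using S(2) by (simp add: trace_diff)
    ultimately show ?thesis
      using h by (simp add: P_S_Gamma_pc P_TT_Gamma_pc scalar_part_Gamma_pc TT_part_Gamma_pc
          scalar_of_trace_zero)
  qed
  then show ?thesis
    by blast
qed

end
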